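(* Let $(W,S)$ be a finitely generated Coxeter system, $u,v\in W$ with $u<v$, and $w,g\in[u,v]$. Then: (a) $v_{S(w)\cup S(g)}$ lies in $[u,v]$ and is the least upper bound $w\vee g$ of $w$ and $g$ in $[u,v]$; moreover $S(w\vee g)=S(w)\cup S(g)$. (b) $v_{S(w)\cap S(g)}$ lies in $[u,v]$ and is the greatest lower bound $w\wedge g$ of $w$ and $g$ in $[u,v]$; moreover $S(w\wedge g)\subseteq S(w)\cap S(g)$.
   Context: $(W,S)$ is a finitely generated Coxeter system with length function $\ell$. For $w\in W$, $S(w)\subseteq S$ is the set of simple reflections appearing in a (any) reduced expression of $w$. For $I\subseteq S$, $W_I$ is the parabolic subgroup generated by $I$, $X_I=\{u\in W:\ell(us)>\ell(u)\ \forall s\in I\}$, and every $w\in W$ factors uniquely as $w=w^Iw_I$ with $w^I\in X_I$, $w_I\in W_I$ (parabolic components along $I$). The partial order on $W$: $u\le v$ iff $v_{S(u)}=u$; $[u,v]=\{w:u\le w\le v\}$. *)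

theory Defs
  imports "HOL-Algebra.Multiplicative_Group"
begin

definition word_eval :: "('a, 'b) monoid_scheme \<Rightarrow> 'a list \<Rightarrow> 'a" where
  "word_eval G xs = foldr (\<lambda>x y. x \<otimes>\<^bsub>G\<^esub> y) xs \<one>\<^bsub>G\<^esub>"

text \<open>Coxeter matrix entry m(s,t) = order of st (0 means infinite).\<close>
definition cox_m :: "('a, 'b) monoid_scheme \<Rightarrow> 'a \<Rightarrow> 'a \<Rightarrow> nat" where
  "cox_m G s t = group.ord G (s \<otimes>\<^bsub>G\<^esub> t)"

definition cox_relators :: "('a, 'b) monoid_scheme \<Rightarrow> 'a set \<Rightarrow> 'a list set" where
  "cox_relators G S = {[s, s] | s. s \<in> S} \<union>
     {concat (replicate (cox_m G s t) [s, t]) | s t. s \<in> S \<and> t \<in> S \<and> cox_m G s t \<noteq> 0}"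

definition cox_step :: "('a, 'b) monoid_scheme \<Rightarrow> 'a set \<Rightarrow> 'a list \<Rightarrow> 'a list \<Rightarrow> bool" where
  "cox_step G S a b \<longleftrightarrow> (\<exists>xs ys r. r \<in> cox_relators G S \<and> a = xs @ ys \<and> b = xs @ r @ ys)"

text \<open>(W,S) is a Coxeter system: W is a group generated by the involutions in S, and
  W has the presentation with generators S and relations (st)^m(s,t) = 1
  (two words in S are equal in W iff they are equivalent modulo the relators).\<close>
definition coxeter_system :: "('a, 'b) monoid_scheme \<Rightarrow> 'a set \<Rightarrow> bool" where
  "coxeter_system G S \<longleftrightarrow> group G \<and> S \<subseteq> carrier G \<and>
     (\<forall>s\<in>S. s \<noteq> \<one>\<^bsub>G\<^esub> \<and> s \<otimes>\<^bsub>G\<^esub> s = \<one>\<^bsub>G\<^esub>) \<and>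
     carrier G = word_eval G ` lists S \<and>
     (\<forall>a\<in>lists S. \<forall>b\<in>lists S.
        word_eval G a = word_eval G b \<longrightarrow> equivclp (cox_step G S) a b)"

definition cox_length :: "('a, 'b) monoid_scheme \<Rightarrow> 'a set \<Rightarrow> 'a \<Rightarrow> nat" where
  "cox_length G S w = (LEAST n. \<exists>xs\<in>lists S. length xs = n \<and> word_eval G xs = w)"

definition reduced_word :: "('a, 'b) monoid_scheme \<Rightarrow> 'a set \<Rightarrow> 'a list \<Rightarrow> 'a \<Rightarrow> bool" where
  "reduced_word G S xs w \<longleftrightarrow> xs \<in> lists S \<and> word_eval G xs = w \<and> length xs = cox_length G S w"

text \<open>S(w): simple reflections occurring in reduced expressions of w
  (independent of the chosen reduced expression).\<close>
definition cox_supp :: "('a, 'b) monoid_scheme \<Rightarrow> 'a set \<Rightarrow> 'a \<Rightarrow> 'a set" where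
  "cox_supp G S w = (\<Union>{set xs | xs. reduced_word G S xs w})"

definition parabolic :: "('a, 'b) monoid_scheme \<Rightarrow> 'a set \<Rightarrow> 'a set" where
  "parabolic G I = word_eval G ` lists I"

definition min_cosets :: "('a, 'b) monoid_scheme \<Rightarrow> 'a set \<Rightarrow> 'a set \<Rightarrow> 'a set" where
  "min_cosets G S I = {u \<in> carrier G. \<forall>s\<in>I. cox_length G S (u \<otimes>\<^bsub>G\<^esub> s) > cox_length G S u}"

text \<open>The parabolic component w_I, where w = w^I w_I with w^I in X_I and w_I in W_I.\<close>
definition par_comp :: "('a, 'b) monoid_scheme \<Rightarrow> 'a set \<Rightarrow> 'a set \<Rightarrow> 'a \<Rightarrow> 'a" where
  "par_comp G S I w = (THE y. y \<in> parabolic G I \<and> w \<otimes>\<^bsub>G\<^esub> inv\<^bsub>G\<^esub> y \<in> min_cosets G S I)"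

definition cox_le :: "('a, 'b) monoid_scheme \<Rightarrow> 'a set \<Rightarrow> 'a \<Rightarrow> 'a \<Rightarrow> bool" where
  "cox_le G S u v \<longleftrightarrow> u \<in> carrier G \<and> v \<in> carrier G \<and> par_comp G S (cox_supp G S u) v = u"

definition cox_interval :: "('a, 'b) monoid_scheme \<Rightarrow> 'a set \<Rightarrow> 'a \<Rightarrow> 'a \<Rightarrow> 'a set" where
  "cox_interval G S u v = {w. cox_le G S u w \<and> cox_le G S w v}"

end

theory Submission
  imports Defs
begin

text \<open>
  Taking parabolic components is transitive: (v_J)_I = v_I for I \<subseteq> J. Consequently,
  below a fixed v the order is inclusion of supports (a, b \<le> v implies a \<le> b iff
  S(a) \<subseteq> S(b)), the elements below v are exactly the v_I, and joins and meets in
  [u,v] are the components of v along unions and intersections of supports. Transitivity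
  comes from the length additivity l(xy) = l(x) + l(y) for x a minimal coset representative
  and y \<in> W_I, which rests on the exchange condition; the latter is derived from the
  Coxeter presentation via Tits' action of words on pairs (reflection, sign).
\<close>

lemma sum_lessThan_add_nat: "(\<Sum>j<m+n. f j) = (\<Sum>j<m. f j) + (\<Sum>j<n. f (m+j))"
  for f :: "nat \<Rightarrow> nat"
  by (induction n) (auto simp: add.assoc)

locale coxeter =
  fixes G (structure) and S :: "'a set"
  assumes coxeter_system: "coxeter_system G S"
begin

sublocale group G
  using coxeter_system by (simp add: coxeter_system_def)

lemma mult_inv_cancel_left [simp]: "x \<in> carrier G \<Longrightarrow> y \<in> carrier G \<Longrightarrow> x \<otimes> (inv x \<otimes> y) = y"
  by (simp flip: m_assoc)

lemma inv_mult_cancel_left [simp]: "x \<in> carrier G \<Longrightarrow> y \<in> carrier G \<Longrightarrow> inv x \<otimes> (x \<otimes> y) = y"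
  by (simp flip: m_assoc)

abbreviation ev :: "'a list \<Rightarrow> 'a" where "ev \<equiv> word_eval G"
abbreviation len :: "'a \<Rightarrow> nat" where "len \<equiv> cox_length G S"
abbreviation supp :: "'a \<Rightarrow> 'a set" where "supp \<equiv> cox_supp G S"
abbreviation W :: "'a set \<Rightarrow> 'a set" where "W \<equiv> parabolic G"
abbreviation X :: "'a set \<Rightarrow> 'a set" where "X \<equiv> min_cosets G S"
abbreviation pcomp :: "'a set \<Rightarrow> 'a \<Rightarrow> 'a" where "pcomp \<equiv> par_comp G S"
abbreviation del :: "nat \<Rightarrow> 'a list \<Rightarrow> 'a list" where "del i xs \<equiv> take i xs @ drop (Suc i) xs"

lemma simple_closed: "s \<in> S \<Longrightarrow> s \<in> carrier G"
  using coxeter_system by (auto simp: coxeter_system_def)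

lemma simple_mult_self: "s \<in> S \<Longrightarrow> s \<otimes> s = \<one>"
  using coxeter_system by (simp add: coxeter_system_def)

lemma simple_neq_one: "s \<in> S \<Longrightarrow> s \<noteq> \<one>"
  using coxeter_system by (simp add: coxeter_system_def)

lemma inv_simple: "s \<in> S \<Longrightarrow> inv s = s"
  by (simp add: inv_equality simple_closed simple_mult_self)

lemma carrier_eq_word_eval: "carrier G = ev ` lists S"
  using coxeter_system by (simp add: coxeter_system_def)

lemma word_eval_eq_equivclp:
  "a \<in> lists S \<Longrightarrow> b \<in> lists S \<Longrightarrow> ev a = ev b \<Longrightarrow> equivclp (cox_step G S) a b"
  using coxeter_system by (simp add: coxeter_system_def)

lemma word_eval_Nil [simp]: "ev [] = \<one>"
  by (simp add: word_eval_def)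

lemma word_eval_Cons [simp]: "ev (x # xs) = x \<otimes> ev xs"
  by (simp add: word_eval_def)

lemma word_eval_closed [simp]: "xs \<in> lists S \<Longrightarrow> ev xs \<in> carrier G"
  by (induction xs) (auto intro: simple_closed)

lemma word_eval_append: "xs \<in> lists S \<Longrightarrow> ys \<in> lists S \<Longrightarrow> ev (xs @ ys) = ev xs \<otimes> ev ys"
  by (induction xs) (auto simp: m_assoc simple_closed)

lemma inv_word_eval: "xs \<in> lists S \<Longrightarrow> inv (ev xs) = ev (rev xs)"
proof (induction xs)
  case (Cons x xs)
  then show ?case
    using word_eval_append[of "rev xs" "[x]"]
    by (simp add: inv_mult_group simple_closed inv_simple in_lists_conv_set)
qed simp

lemma del_subset: "set (del i xs) \<subseteq> set xs"
  using set_take_subset[of i xs] set_drop_subset[of "Suc i" xs] by auto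

lemma del_in_lists: "xs \<in> lists A \<Longrightarrow> del i xs \<in> lists A"
  using del_subset[of i xs] by (metis in_lists_conv_set subsetD)

lemma length_le_word: "xs \<in> lists S \<Longrightarrow> len (ev xs) \<le> length xs"
  unfolding cox_length_def by (rule Least_le) auto

lemma reduced_word_iff: "reduced_word G S xs w \<longleftrightarrow> xs \<in> lists S \<and> ev xs = w \<and> length xs = len w"
  by (simp add: reduced_word_def)

lemma obtain_reduced_word:
  assumes "w \<in> carrier G"
  obtains xs where "xs \<in> lists S" "length xs = len w" "ev xs = w"
proof -
  obtain xs where "xs \<in> lists S" "ev xs = w"
    using assms carrier_eq_word_eval by auto
  then have "\<exists>xs\<in>lists S. length xs = len w \<and> ev xs = w"
    unfolding cox_length_def by (rule_tac LeastI_ex) auto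
  then show ?thesis using that by blast
qed

lemma length_mult_le: "x \<in> carrier G \<Longrightarrow> y \<in> carrier G \<Longrightarrow> len (x \<otimes> y) \<le> len x + len y"
  by (metis obtain_reduced_word length_le_word word_eval_append length_append append_in_lists_conv)

lemma length_one [simp]: "len \<one> = 0"
  using length_le_word[of "[]"] by simp

lemma length_eq_0D: "w \<in> carrier G \<Longrightarrow> len w = 0 \<Longrightarrow> w = \<one>"
  by (metis obtain_reduced_word length_0_conv word_eval_Nil)

lemma length_simple: "s \<in> S \<Longrightarrow> len s = 1"
proof -
  assume s: "s \<in> S"
  have "len s \<le> 1"
    using length_le_word[of "[s]"] s simple_closed by simp
  moreover have "len s \<noteq> 0"
    using length_eq_0D simple_neq_one s simple_closed by blast
  ultimately show ?thesis by simp
qed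

lemma conj_eq_iff:
  assumes "w \<in> carrier G" "r \<in> carrier G" "c \<in> carrier G"
  shows "w \<otimes> r \<otimes> inv w = c \<longleftrightarrow> r = inv w \<otimes> c \<otimes> w"
proof -
  have "w \<otimes> r \<otimes> inv w = c \<longleftrightarrow> w \<otimes> r = c \<otimes> w"
    by (rule inv_solve_right') (use assms in auto)
  also have "\<dots> \<longleftrightarrow> r = inv w \<otimes> (c \<otimes> w)"
    by (subst inv_solve_left) (use assms in auto)
  finally show ?thesis
    using assms by (simp add: m_assoc)
qed

lemma simple_mult_eq_one_iff: "s \<in> S \<Longrightarrow> r \<in> carrier G \<Longrightarrow> s \<otimes> r = \<one> \<longleftrightarrow> r = s"
proof
  assume "s \<in> S" "r \<in> carrier G" "s \<otimes> r = \<one>"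
  then have "inv r = s"
    using inv_equality simple_closed by blast
  then show "r = s"
    using \<open>s \<in> S\<close> \<open>r \<in> carrier G\<close> inv_simple by (metis inv_inv)
qed (simp add: simple_mult_self)

text \<open>
  Tits' action of S on pairs (t, \<epsilon>) of a group element and a sign, with the sign flipped
  exactly when t = s; the sign is modelled by a boolean. Outside the carrier it is the
  identity, so that it is a total function.
\<close>

definition refl_step :: "'a \<Rightarrow> 'a \<times> bool \<Rightarrow> 'a \<times> bool" where
  "refl_step s = (\<lambda>(r, b). if s \<in> S \<and> r \<in> carrier G then (s \<otimes> r \<otimes> s, b \<noteq> (r = s)) else (r, b))"

definition word_action :: "'a list \<Rightarrow> 'a \<times> bool \<Rightarrow> 'a \<times> bool" where
  "word_action xs = foldr (\<lambda>s f. refl_step s \<circ> f) xs id"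

lemma word_action_Nil [simp]: "word_action [] = id"
  by (simp add: word_action_def)

lemma word_action_Cons [simp]: "word_action (s # xs) = refl_step s \<circ> word_action xs"
  by (simp add: word_action_def)

lemma word_action_append: "word_action (xs @ ys) = word_action xs \<circ> word_action ys"
  by (induction xs) auto

lemma word_action_outside_carrier: "r \<notin> carrier G \<Longrightarrow> word_action xs (r, b) = (r, b)"
  by (induction xs) (auto simp: refl_step_def)

text \<open>
  The parity of the number of positions i with s_k ... s_(i+1) s_i s_(i+1) ... s_k = r
  in the word s_1 ... s_k.
\<close>

primrec crossing_parity :: "'a list \<Rightarrow> 'a \<Rightarrow> bool" where
  "crossing_parity [] r = False"
| "crossing_parity (s # xs) r = (crossing_parity xs r \<noteq> (ev xs \<otimes> r \<otimes> inv (ev xs) = s))"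

lemma word_action_conv:
  "xs \<in> lists S \<Longrightarrow> r \<in> carrier G \<Longrightarrow>
   word_action xs (r, b) = (ev xs \<otimes> r \<otimes> inv (ev xs), b \<noteq> crossing_parity xs r)"
proof (induction xs)
  case (Cons s xs)
  then have s: "s \<in> S" "s \<in> carrier G" and xs: "xs \<in> lists S"
    using simple_closed by auto
  have "s \<otimes> (ev xs \<otimes> r \<otimes> inv (ev xs)) \<otimes> s = s \<otimes> ev xs \<otimes> r \<otimes> inv (s \<otimes> ev xs)"
    using s xs Cons.prems by (simp add: m_assoc inv_mult_group inv_simple)
  then show ?case
    using Cons s xs by (auto simp: refl_step_def)
qed simp

lemma crossing_parity_deletion:
  "xs \<in> lists S \<Longrightarrow> r \<in> carrier G \<Longrightarrow> crossing_parity xs r \<Longrightarrow>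
   \<exists>i<length xs. ev xs \<otimes> r = ev (del i xs)"
proof (induction xs)
  case (Cons s xs)
  then have s: "s \<in> S" "s \<in> carrier G" and xs: "xs \<in> lists S"
    using simple_closed by auto
  let ?w = "ev xs"
  have w: "?w \<in> carrier G"
    using xs by simp
  show ?case
  proof (cases "crossing_parity xs r")
    case True
    then obtain i where "i < length xs" "?w \<otimes> r = ev (del i xs)"
      using Cons xs by blast
    then have "Suc i < length (s # xs)" "ev (s # xs) \<otimes> r = ev (del (Suc i) (s # xs))"
      using s w Cons.prems by (simp_all add: m_assoc)
    then show ?thesis by blast
  next
    case False
    then have "?w \<otimes> r \<otimes> inv ?w = s"
      using Cons.prems by simp
    then have "r = inv ?w \<otimes> s \<otimes> ?w"
      using conj_eq_iff w Cons.prems s by blast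
    then have "ev (s # xs) \<otimes> r = ev (del 0 (s # xs))"
      using w s by (simp add: m_assoc simple_mult_self flip: m_assoc[of s s])
    then show ?thesis by blast
  qed
qed simp

lemma word_action_simple_square: "s \<in> S \<Longrightarrow> word_action [s, s] = id"
proof
  fix p :: "'a \<times> bool"
  assume s: "s \<in> S"
  obtain r b where p: "p = (r, b)" by fastforce
  show "word_action [s, s] p = id p"
  proof (cases "r \<in> carrier G")
    case True
    have "word_action [s, s] (r, b) = (ev [s, s] \<otimes> r \<otimes> inv (ev [s, s]), b \<noteq> crossing_parity [s, s] r)"
      using s True by (intro word_action_conv) auto
    also have "\<dots> = (r, b)"
      using s True by (simp add: inv_simple simple_mult_eq_one_iff simple_closed simple_mult_self)
    finally show ?thesis using p by simp
  qed (simp add: word_action_outside_carrier p del: word_action_Cons)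
qed

lemma alternating_word_in_lists: "s \<in> S \<Longrightarrow> t \<in> S \<Longrightarrow> concat (replicate n [s, t]) \<in> lists S"
  by (induction n) auto

lemma word_eval_alternating:
  "s \<in> S \<Longrightarrow> t \<in> S \<Longrightarrow> ev (concat (replicate n [s, t])) = (s \<otimes> t) [^] n"
proof (induction n)
  case (Suc n)
  then have c: "s \<in> carrier G" "t \<in> carrier G"
    using simple_closed by auto
  then have "ev (concat (replicate (Suc n) [s, t])) = (s \<otimes> t) \<otimes> (s \<otimes> t) [^] n"
    using Suc by (simp add: m_assoc)
  also have "\<dots> = (s \<otimes> t) [^] Suc n"
    by (rule nat_pow_Suc2[symmetric]) (use c in simp)
  finally show ?case .
qed simp

lemma simple_mult_pow_commute:
  assumes st: "s \<in> S" "t \<in> S"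
  shows "t \<otimes> (s \<otimes> t) [^] (n::nat) = (t \<otimes> s) [^] n \<otimes> t"
proof (induction n)
  case (Suc n)
  have c: "s \<in> carrier G" "t \<in> carrier G"
    using st simple_closed by auto
  have "t \<otimes> (s \<otimes> t) [^] Suc n = (t \<otimes> (s \<otimes> t) [^] n) \<otimes> (s \<otimes> t)"
    using c by (simp add: m_assoc)
  also have "\<dots> = (t \<otimes> s) [^] n \<otimes> t \<otimes> (s \<otimes> t)"
    by (simp only: Suc.IH)
  also have "\<dots> = (t \<otimes> s) [^] Suc n \<otimes> t"
    using c by (simp add: m_assoc)
  finally show ?case .
qed (simp add: st simple_closed)

lemma inv_simple_mult_pow:
  "s \<in> S \<Longrightarrow> t \<in> S \<Longrightarrow> inv ((s \<otimes> t) [^] (n::nat)) = (t \<otimes> s) [^] n"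
  by (simp add: nat_pow_inv[symmetric] inv_mult_group simple_closed inv_simple)

lemma conj_alternating_even_iff:
  fixes n :: nat
  assumes st: "s \<in> S" "t \<in> S" and r: "r \<in> carrier G"
  shows "(s \<otimes> t) [^] n \<otimes> r \<otimes> inv ((s \<otimes> t) [^] n) = t \<longleftrightarrow> r = (t \<otimes> s) [^] (2 * n) \<otimes> t"
proof -
  have c: "s \<in> carrier G" "t \<in> carrier G"
    using st simple_closed by auto
  have "inv ((s \<otimes> t) [^] n) \<otimes> t \<otimes> (s \<otimes> t) [^] n = (t \<otimes> s) [^] n \<otimes> (t \<otimes> (s \<otimes> t) [^] n)"
    unfolding inv_simple_mult_pow[OF st] using c by (simp add: m_assoc)
  also have "\<dots> = (t \<otimes> s) [^] n \<otimes> (t \<otimes> s) [^] n \<otimes> t"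
    using c by (simp add: simple_mult_pow_commute[OF st] m_assoc)
  also have "\<dots> = (t \<otimes> s) [^] (2 * n) \<otimes> t"
    using c by (simp add: nat_pow_mult mult_2)
  finally show ?thesis
    using conj_eq_iff c r by simp
qed

lemma conj_alternating_odd_iff:
  fixes n :: nat
  assumes st: "s \<in> S" "t \<in> S" and r: "r \<in> carrier G"
  shows "t \<otimes> (s \<otimes> t) [^] n \<otimes> r \<otimes> inv (t \<otimes> (s \<otimes> t) [^] n) = s \<longleftrightarrow>
    r = (t \<otimes> s) [^] Suc (2 * n) \<otimes> t"
proof -
  have c: "s \<in> carrier G" "t \<in> carrier G"
    using st simple_closed by auto
  have "inv (t \<otimes> (s \<otimes> t) [^] n) = (t \<otimes> s) [^] n \<otimes> t"
    using st c by (simp add: inv_mult_group inv_simple_mult_pow inv_simple)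
  then have "inv (t \<otimes> (s \<otimes> t) [^] n) \<otimes> s \<otimes> (t \<otimes> (s \<otimes> t) [^] n) =
    (t \<otimes> s) [^] n \<otimes> (t \<otimes> s) \<otimes> ((t \<otimes> s) [^] n \<otimes> t)"
    using c by (simp add: m_assoc simple_mult_pow_commute[OF st])
  also have "\<dots> = (t \<otimes> s) [^] Suc n \<otimes> (t \<otimes> s) [^] n \<otimes> t"
    using c by (simp add: m_assoc)
  also have "\<dots> = (t \<otimes> s) [^] Suc (2 * n) \<otimes> t"
    using c by (simp only: nat_pow_mult m_closed mult_2 add_Suc)
  finally show ?thesis
    using conj_eq_iff[of "t \<otimes> (s \<otimes> t) [^] n" r s] c r by simp
qed

lemma crossing_parity_alternating:
  fixes n :: nat
  assumes st: "s \<in> S" "t \<in> S" and r: "r \<in> carrier G"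
  shows "crossing_parity (concat (replicate n [s, t])) r =
    odd (\<Sum>j<2 * n. if r = (t \<otimes> s) [^] j \<otimes> t then 1 else 0::nat)"
proof (induction n)
  case (Suc n)
  let ?xs = "concat (replicate n [s, t])"
  have "crossing_parity (concat (replicate (Suc n) [s, t])) r =
    ((crossing_parity ?xs r \<noteq> (ev ?xs \<otimes> r \<otimes> inv (ev ?xs) = t)) \<noteq>
     (t \<otimes> ev ?xs \<otimes> r \<otimes> inv (t \<otimes> ev ?xs) = s))"
    by simp
  also have "\<dots> = ((crossing_parity ?xs r \<noteq> (r = (t \<otimes> s) [^] (2 * n) \<otimes> t)) \<noteq>
     (r = (t \<otimes> s) [^] Suc (2 * n) \<otimes> t))"
    by (simp only: word_eval_alternating[OF st] conj_alternating_even_iff[OF st r]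
        conj_alternating_odd_iff[OF st r])
  finally show ?case
    using Suc.IH by simp
qed simp

text \<open>
  In the alternating word of length 2m, the conjugates (ts)^j t with j < 2m, counted in
  crossing_parity, repeat with period m, so each occurs an even number of times.
\<close>

lemma word_action_braid:
  assumes st: "s \<in> S" "t \<in> S"
  shows "word_action (concat (replicate (ord (s \<otimes> t)) [s, t])) = id"
proof
  fix p :: "'a \<times> bool"
  obtain r b where p: "p = (r, b)" by fastforce
  let ?m = "ord (s \<otimes> t)"
  let ?xs = "concat (replicate ?m [s, t])"
  show "word_action ?xs p = id p"
  proof (cases "r \<in> carrier G")
    case True
    have c: "s \<in> carrier G" "t \<in> carrier G"
      using st simple_closed by auto
    have st_m: "(s \<otimes> t) [^] ?m = \<one>"
      using c by simp
    then have ts_m: "(t \<otimes> s) [^] ?m = \<one>"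
      using inv_simple_mult_pow[OF st, of ?m] by simp
    define f where "f j = (if r = (t \<otimes> s) [^] j \<otimes> t then 1 else 0::nat)" for j :: nat
    have "f (?m + j) = f j" for j
      using ts_m c by (simp add: f_def nat_pow_mult[symmetric])
    then have "(\<Sum>j<2 * ?m. f j) = 2 * (\<Sum>j<?m. f j)"
      using sum_lessThan_add_nat[of f ?m ?m] by (simp add: mult_2)
    then have "\<not> crossing_parity ?xs r"
      using crossing_parity_alternating[OF st True, of ?m] by (simp add: f_def)
    then show ?thesis
      using word_action_conv[of ?xs r b] alternating_word_in_lists[OF st] True st_m p
      by (simp add: word_eval_alternating[OF st])
  qed (simp add: word_action_outside_carrier p del: word_action_Cons)
qed

lemma word_action_relator: "r \<in> cox_relators G S \<Longrightarrow> word_action r = id"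
  unfolding cox_relators_def cox_m_def using word_action_simple_square word_action_braid by auto

lemma word_action_cong:
  assumes "a \<in> lists S" "b \<in> lists S" "ev a = ev b"
  shows "word_action a = word_action b"
proof -
  have "equivclp (cox_step G S) a b"
    using word_eval_eq_equivclp assms by blast
  then show ?thesis
  proof (induction rule: equivclp_induct)
    case (step y z)
    then have "word_action y = word_action z"
      unfolding cox_step_def using word_action_relator by (auto simp: word_action_append)
    with step.IH show ?case by simp
  qed simp
qed

lemma crossing_parity_cong:
  assumes "a \<in> lists S" "b \<in> lists S" "ev a = ev b" "r \<in> carrier G"
  shows "crossing_parity a r = crossing_parity b r"
  using word_action_cong[OF assms(1-3)] word_action_conv[OF assms(1,4), of False]
    word_action_conv[OF assms(2,4), of False]
  by simp

lemma crossing_parity_snoc_simple: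
  assumes ys: "ys \<in> lists S" and s: "s \<in> S"
  shows "crossing_parity (ys @ [s]) s \<longleftrightarrow> \<not> crossing_parity ys s"
proof -
  have c: "s \<in> carrier G"
    using s simple_closed by auto
  have "word_action (ys @ [s]) (s, False) = word_action ys (s, True)"
    using s c by (simp add: word_action_append refl_step_def simple_mult_self)
  then show ?thesis
    using word_action_conv[of "ys @ [s]" s False] word_action_conv[OF ys c, of True] ys s c by simp
qed

lemma length_mult_less_of_crossing_parity:
  assumes "xs \<in> lists S" "r \<in> carrier G" "crossing_parity xs r"
  shows "len (ev xs \<otimes> r) < length xs"
proof -
  obtain i where "i < length xs" "ev xs \<otimes> r = ev (del i xs)"
    using crossing_parity_deletion assms by blast
  then show ?thesis
    using length_le_word[OF del_in_lists[OF assms(1)], of i] by simp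
qed

theorem exchange_condition:
  assumes w: "w \<in> carrier G" and s: "s \<in> S" and le: "len (w \<otimes> s) \<le> len w"
    and xs: "xs \<in> lists S" "ev xs = w"
  shows "\<exists>i<length xs. w \<otimes> s = ev (del i xs)"
proof -
  have c: "s \<in> carrier G"
    using s simple_closed by auto
  obtain ys where ys: "ys \<in> lists S" "length ys = len (w \<otimes> s)" "ev ys = w \<otimes> s"
    using obtain_reduced_word[of "w \<otimes> s"] w c by auto
  have ys_s: "ys @ [s] \<in> lists S" "ev (ys @ [s]) = w"
    using ys s w c by (simp_all add: word_eval_append m_assoc simple_mult_self)
  have "\<not> crossing_parity ys s"
  proof
    assume "crossing_parity ys s"
    then have "len (w \<otimes> s \<otimes> s) < len (w \<otimes> s)"
      using length_mult_less_of_crossing_parity[OF ys(1) c] ys by simp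
    then show False
      using le w c s by (simp add: m_assoc simple_mult_self)
  qed
  then have "crossing_parity (ys @ [s]) s"
    using crossing_parity_snoc_simple[OF ys(1) s] by simp
  then have "crossing_parity xs s"
    using crossing_parity_cong[OF ys_s(1) xs(1) _ c] ys_s xs by simp
  then show ?thesis
    using crossing_parity_deletion[OF xs(1) c] xs by simp
qed

lemma exchange_condition_append:
  assumes xs: "xs \<in> lists S" and ys: "ys \<in> lists S" and s: "s \<in> S"
    and le: "len (ev xs \<otimes> ev ys \<otimes> s) \<le> len (ev xs \<otimes> ev ys)"
  shows "(\<exists>i<length xs. ev xs \<otimes> ev ys \<otimes> s = ev (del i xs) \<otimes> ev ys) \<or>
    (\<exists>j<length ys. ev ys \<otimes> s = ev (del j ys))"
proof -
  have c: "ev xs \<in> carrier G" "ev ys \<in> carrier G" "s \<in> carrier G"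
    using xs ys s simple_closed by auto
  obtain i where i: "i < length (xs @ ys)" "ev xs \<otimes> ev ys \<otimes> s = ev (del i (xs @ ys))"
    using exchange_condition[of "ev xs \<otimes> ev ys" s "xs @ ys"] xs ys s le c
    by (auto simp: word_eval_append)
  show ?thesis
  proof (cases "i < length xs")
    case True
    then have "del i (xs @ ys) = del i xs @ ys"
      by simp
    then show ?thesis
      using i True word_eval_append[OF del_in_lists[OF xs] ys] by auto
  next
    case False
    define j where "j = i - length xs"
    have "del i (xs @ ys) = xs @ del j ys"
      using False by (simp add: j_def Suc_diff_le)
    then have "ev xs \<otimes> (ev ys \<otimes> s) = ev xs \<otimes> ev (del j ys)"
      using i c word_eval_append[OF xs del_in_lists[OF ys]] by (simp add: m_assoc)
    then have "ev ys \<otimes> s = ev (del j ys)"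
      using c del_in_lists[OF ys] by simp
    moreover have "j < length ys"
      using i False j_def by simp
    ultimately show ?thesis
      by blast
  qed
qed

lemma length_mult_simple:
  assumes w: "w \<in> carrier G" and s: "s \<in> S"
  shows "len (w \<otimes> s) = Suc (len w) \<or> Suc (len (w \<otimes> s)) = len w"
proof -
  have c: "s \<in> carrier G"
    using s simple_closed by auto
  have "len (w \<otimes> s) \<le> Suc (len w)"
    using length_mult_le[OF w c] length_simple[OF s] by simp
  moreover have "len w \<le> Suc (len (w \<otimes> s))"
    using length_mult_le[of "w \<otimes> s" s] length_simple[OF s] w c s by (simp add: m_assoc simple_mult_self)
  moreover have "len (w \<otimes> s) \<noteq> len w"
  proof
    assume eq: "len (w \<otimes> s) = len w"
    obtain xs where xs: "xs \<in> lists S" "length xs = len w" "ev xs = w"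
      using obtain_reduced_word w by blast
    then obtain i where "i < length xs" "w \<otimes> s = ev (del i xs)"
      using exchange_condition[OF w s _ xs(1,3)] eq by auto
    then show False
      using length_le_word[OF del_in_lists[OF xs(1)], of i] xs eq by simp
  qed
  ultimately show ?thesis by linarith
qed

lemma exists_reduced_subword:
  "xs \<in> lists S \<Longrightarrow> \<exists>ys. set ys \<subseteq> set xs \<and> ev ys = ev xs \<and> length ys = len (ev xs)"
proof (induction xs rule: rev_induct)
  case (snoc s xs)
  then have s: "s \<in> S" "s \<in> carrier G" and xs: "xs \<in> lists S"
    using simple_closed by auto
  obtain ys where ys: "set ys \<subseteq> set xs" "ev ys = ev xs" "length ys = len (ev xs)"
    using snoc xs by blast
  have ys_S: "ys \<in> lists S"
    using ys(1) xs by auto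
  let ?w = "ev xs"
  have w: "?w \<in> carrier G"
    using xs by simp
  have e: "ev (xs @ [s]) = ?w \<otimes> s"
    using xs s by (simp add: word_eval_append)
  show ?case
  proof (cases "len (?w \<otimes> s) = Suc (len ?w)")
    case True
    then show ?thesis
      using ys ys_S s e by (intro exI[of _ "ys @ [s]"]) (auto simp: word_eval_append)
  next
    case False
    then have l: "Suc (len (?w \<otimes> s)) = len ?w"
      using length_mult_simple[OF w s(1)] by simp
    then obtain i where i: "i < length ys" "?w \<otimes> s = ev (del i ys)"
      using exchange_condition[OF w s(1) _ ys_S ys(2)] by auto
    have "set (del i ys) \<subseteq> set (xs @ [s])"
      using del_subset[of i ys] ys(1) by auto
    then show ?thesis
      using i ys(3) l e by (intro exI[of _ "del i ys"]) simp
  qed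
qed simp

lemma reduced_prefix:
  assumes "xs \<in> lists S" "ys \<in> lists S" "length (xs @ ys) = len (ev (xs @ ys))"
  shows "length xs = len (ev xs)"
  using assms length_mult_le[of "ev xs" "ev ys"] length_le_word[of xs] length_le_word[of ys]
  by (simp add: word_eval_append)

lemma parabolic_closed: "I \<subseteq> S \<Longrightarrow> y \<in> W I \<Longrightarrow> y \<in> carrier G"
  unfolding parabolic_def using lists_mono[of I S] by (auto intro: word_eval_closed)

lemma one_in_parabolic: "\<one> \<in> W I"
  unfolding parabolic_def by (rule image_eqI[of _ _ "[]"]) auto

lemma simple_in_parabolic: "s \<in> I \<Longrightarrow> I \<subseteq> S \<Longrightarrow> s \<in> W I"
  unfolding parabolic_def by (rule image_eqI[of _ _ "[s]"]) (auto simp: simple_closed subsetD)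

lemma parabolic_mult_closed:
  assumes I: "I \<subseteq> S" and "x \<in> W I" "y \<in> W I"
  shows "x \<otimes> y \<in> W I"
proof -
  obtain xs ys where xs: "xs \<in> lists I" "ys \<in> lists I" "x = ev xs" "y = ev ys"
    using assms unfolding parabolic_def by blast
  moreover have "xs \<in> lists S" "ys \<in> lists S"
    using xs I lists_mono by blast+
  ultimately have "x \<otimes> y = ev (xs @ ys)"
    by (simp add: word_eval_append)
  then show ?thesis
    unfolding parabolic_def using xs by auto
qed

lemma parabolic_inv_closed:
  assumes I: "I \<subseteq> S" and "x \<in> W I"
  shows "inv x \<in> W I"
proof -
  obtain xs where xs: "xs \<in> lists I" "x = ev xs"
    using assms unfolding parabolic_def by blast
  moreover have "xs \<in> lists S"
    using xs I lists_mono by blast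
  ultimately have "inv x = ev (rev xs)"
    by (simp add: inv_word_eval)
  moreover have "rev xs \<in> lists I"
    using xs by (simp add: in_lists_conv_set)
  ultimately show ?thesis
    unfolding parabolic_def by blast
qed

lemma parabolic_mono: "I \<subseteq> J \<Longrightarrow> W I \<subseteq> W J"
  unfolding parabolic_def using lists_mono by blast

lemma parabolic_reduced_word:
  assumes I: "I \<subseteq> S" and y: "y \<in> W I"
  obtains ys where "ys \<in> lists I" "ev ys = y" "length ys = len y"
proof -
  obtain xs where xs: "xs \<in> lists I" "y = ev xs"
    using y unfolding parabolic_def by auto
  then obtain ys where "set ys \<subseteq> set xs" "ev ys = ev xs" "length ys = len (ev xs)"
    using exists_reduced_subword[of xs] I by auto
  then show ?thesis
    using that xs by auto
qed

lemma simple_in_parabolicD: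
  assumes I: "I \<subseteq> S" and s: "s \<in> S" "s \<in> W I"
  shows "s \<in> I"
proof -
  obtain ys where ys: "ys \<in> lists I" "ev ys = s" "length ys = 1"
    using parabolic_reduced_word[OF I s(2)] length_simple[OF s(1)] by metis
  then obtain t where "ys = [t]"
    by (cases ys) auto
  then show ?thesis
    using ys I by (auto simp: simple_closed)
qed

lemma reduced_word_in_parabolic:
  "I \<subseteq> S \<Longrightarrow> zs \<in> lists S \<Longrightarrow> ev zs \<in> W I \<Longrightarrow> length zs = len (ev zs) \<Longrightarrow> set zs \<subseteq> I"
proof (induction zs rule: rev_induct)
  case (snoc s zs)
  then have I: "I \<subseteq> S" and s: "s \<in> S" "s \<in> carrier G" and zs: "zs \<in> lists S"
    using simple_closed by auto
  let ?w = "ev (zs @ [s])"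
  have ew: "?w = ev zs \<otimes> s" and ws: "?w \<otimes> s = ev zs"
    using zs s by (simp_all add: word_eval_append m_assoc simple_mult_self)
  have red: "length zs = len (ev zs)"
    using reduced_prefix[of zs "[s]"] zs s snoc.prems by simp
  obtain ys where ys: "ys \<in> lists I" "ev ys = ?w" "length ys = len ?w"
    using parabolic_reduced_word[OF I snoc.prems(3)] by blast
  have "ys \<in> lists S"
    using ys(1) I lists_mono by blast
  moreover have "len (?w \<otimes> s) \<le> len ?w"
    using ws red snoc.prems(4) by simp
  ultimately obtain i where "ev zs = ev (del i ys)"
    using exchange_condition[of ?w s ys] ys(2) ws s zs by auto
  then have zs_W: "ev zs \<in> W I"
    using del_in_lists[OF ys(1)] unfolding parabolic_def by auto
  have "s = inv (ev zs) \<otimes> ?w"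
    using ew zs s by simp
  then have "s \<in> W I"
    using parabolic_mult_closed[OF I parabolic_inv_closed[OF I zs_W] snoc.prems(3)] by simp
  then show ?case
    using snoc.IH[OF I zs zs_W red] simple_in_parabolicD[OF I s(1)] by simp
qed simp

lemma supp_subset_of_parabolic: "I \<subseteq> S \<Longrightarrow> w \<in> W I \<Longrightarrow> supp w \<subseteq> I"
  unfolding cox_supp_def reduced_word_iff using reduced_word_in_parabolic by blast

lemma supp_subset_simple: "supp w \<subseteq> S"
  unfolding cox_supp_def reduced_word_iff by auto

lemma in_parabolic_supp: "w \<in> carrier G \<Longrightarrow> w \<in> W (supp w)"
proof -
  assume "w \<in> carrier G"
  then obtain xs where xs: "xs \<in> lists S" "length xs = len w" "ev xs = w"
    using obtain_reduced_word by blast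
  then have "set xs \<subseteq> supp w"
    unfolding cox_supp_def reduced_word_iff by blast
  then show ?thesis
    unfolding parabolic_def using xs by auto
qed

lemma supp_mult_right:
  assumes x: "x \<in> carrier G" and y: "y \<in> carrier G" and l: "len (x \<otimes> y) = len x + len y"
  shows "supp y \<subseteq> supp (x \<otimes> y)"
proof
  fix a
  assume "a \<in> supp y"
  then obtain ys where ys: "ys \<in> lists S" "ev ys = y" "length ys = len y" "a \<in> set ys"
    unfolding cox_supp_def reduced_word_iff by blast
  obtain xs where xs: "xs \<in> lists S" "length xs = len x" "ev xs = x"
    using obtain_reduced_word x by blast
  have "reduced_word G S (xs @ ys) (x \<otimes> y)"
    unfolding reduced_word_iff using xs ys l by (simp add: word_eval_append)
  then show "a \<in> supp (x \<otimes> y)"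
    unfolding cox_supp_def using ys(4) by auto
qed

definition min_in_coset :: "'a set \<Rightarrow> 'a \<Rightarrow> bool" where
  "min_in_coset I u \<longleftrightarrow> (\<forall>v\<in>W I. len u \<le> len (u \<otimes> v))"

lemma min_in_coset_mult_simple:
  assumes I: "I \<subseteq> S" and u: "u \<in> carrier G" and min: "min_in_coset I u"
    and vs: "vs \<in> lists I" and s: "s \<in> I" and red: "length (vs @ [s]) = len (ev (vs @ [s]))"
  shows "len (u \<otimes> ev vs) < len (u \<otimes> ev vs \<otimes> s)"
proof (rule ccontr)
  have vs_S: "vs \<in> lists S" and sS: "s \<in> S" and sc: "s \<in> carrier G"
    using vs s I lists_mono simple_closed by blast+
  let ?v = "ev vs"
  have v: "?v \<in> carrier G" and v_W: "?v \<in> W I"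
    using vs_S vs unfolding parabolic_def by auto
  obtain us where us: "us \<in> lists S" "length us = len u" "ev us = u"
    using obtain_reduced_word u by blast
  assume "\<not> len (u \<otimes> ?v) < len (u \<otimes> ?v \<otimes> s)"
  then consider (prefix) i where "i < length us" "u \<otimes> ?v \<otimes> s = ev (del i us) \<otimes> ?v"
    | (suffix) j where "j < length vs" "?v \<otimes> s = ev (del j vs)"
    using exchange_condition_append[OF us(1) vs_S sS] us(3) by fastforce
  then show False
  proof cases
    case prefix
    have del_us: "del i us \<in> lists S"
      using del_in_lists us(1) by blast
    have "u \<otimes> (?v \<otimes> s \<otimes> inv ?v) = (u \<otimes> ?v \<otimes> s) \<otimes> inv ?v"
      using u v sc by (simp add: m_assoc)
    also have "\<dots> = ev (del i us)"
      using prefix v del_us by (simp add: m_assoc)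
    finally have "u \<otimes> (?v \<otimes> s \<otimes> inv ?v) = ev (del i us)" .
    moreover have "?v \<otimes> s \<otimes> inv ?v \<in> W I"
      using parabolic_mult_closed[OF I] parabolic_inv_closed[OF I] simple_in_parabolic[OF s I] v_W
      by blast
    ultimately have "len u \<le> len (ev (del i us))"
      using min unfolding min_in_coset_def by metis
    also have "\<dots> < len u"
      using length_le_word[OF del_us] prefix(1) us(2) by simp
    finally show False by simp
  next
    case suffix
    then have "ev (vs @ [s]) = ev (del j vs)"
      using vs_S sS simple_closed by (simp add: word_eval_append)
    then show False
      using length_le_word[OF del_in_lists[OF vs_S], of j] red suffix(1) by simp
  qed
qed

lemma length_mult_of_min_in_coset:
  assumes I: "I \<subseteq> S" and u: "u \<in> carrier G" and min: "min_in_coset I u" and v: "v \<in> W I"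
  shows "len (u \<otimes> v) = len u + len v"
proof -
  have "len (u \<otimes> ev vs) = len u + length vs"
    if "vs \<in> lists I" "length vs = len (ev vs)" for vs
    using that
  proof (induction vs rule: rev_induct)
    case (snoc s vs)
    have vs_S: "vs \<in> lists S" and s: "s \<in> I" "s \<in> S" "s \<in> carrier G"
      using snoc.prems I lists_mono simple_closed by auto
    have "length vs = len (ev vs)"
      using reduced_prefix[of vs "[s]"] vs_S s snoc.prems I by auto
    then have "len (u \<otimes> ev vs) = len u + length vs"
      using snoc by simp
    moreover have "len (u \<otimes> ev vs) < len (u \<otimes> ev vs \<otimes> s)"
      using min_in_coset_mult_simple[OF I u min] snoc.prems s by simp
    ultimately show ?case
      using length_mult_simple[of "u \<otimes> ev vs" s] u vs_S s I
      by (auto simp: word_eval_append m_assoc)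
  qed (use u in simp)
  then show ?thesis
    using parabolic_reduced_word[OF I v] by metis
qed

lemma exists_min_in_coset:
  assumes I: "I \<subseteq> S" and w: "w \<in> carrier G"
  shows "\<exists>y\<in>W I. min_in_coset I (w \<otimes> inv y)"
proof -
  obtain y where y: "y \<in> W I" and least: "\<And>z. z \<in> W I \<Longrightarrow> len (w \<otimes> inv y) \<le> len (w \<otimes> inv z)"
    using ex_has_least_nat[of "\<lambda>y. y \<in> W I" \<one> "\<lambda>y. len (w \<otimes> inv y)"] one_in_parabolic by blast
  have "len (w \<otimes> inv y) \<le> len (w \<otimes> inv y \<otimes> v)" if v: "v \<in> W I" for v
  proof -
    have "v \<in> carrier G" "y \<in> carrier G"
      using v y parabolic_closed I by auto
    then have "w \<otimes> inv (inv v \<otimes> y) = w \<otimes> inv y \<otimes> v"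
      using w by (simp add: inv_mult_group m_assoc)
    then show ?thesis
      using least[OF parabolic_mult_closed[OF I parabolic_inv_closed[OF I v] y]] by simp
  qed
  then show ?thesis
    using y unfolding min_in_coset_def by blast
qed

lemma min_cosetsI:
  assumes I: "I \<subseteq> S" and u: "u \<in> carrier G" and min: "min_in_coset I u"
  shows "u \<in> X I"
  unfolding min_cosets_def
proof (intro CollectI conjI ballI u)
  fix s
  assume s: "s \<in> I"
  then have "len u \<le> len (u \<otimes> s)"
    using min simple_in_parabolic[OF s I] unfolding min_in_coset_def by blast
  then show "len u < len (u \<otimes> s)"
    using length_mult_simple[OF u, of s] s I by auto
qed

lemma parabolic_descent:
  assumes I: "I \<subseteq> S" and y: "y \<in> W I" and ne: "y \<noteq> \<one>"
  obtains s where "s \<in> I" "y \<otimes> s \<in> W I" "len (y \<otimes> s) < len y"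
proof -
  obtain ys where ys: "ys \<in> lists I" "ev ys = y" "length ys = len y"
    using parabolic_reduced_word[OF I y] by blast
  then obtain ys' s where ys': "ys = ys' @ [s]"
    using ne by (metis rev_exhaust word_eval_Nil)
  have s: "s \<in> I" "s \<in> S" and ys'_I: "ys' \<in> lists I" and ys'_S: "ys' \<in> lists S"
    using ys ys' I lists_mono by auto
  have "y = ev ys' \<otimes> s"
    using ys ys' ys'_S s simple_closed by (simp add: word_eval_append)
  then have "y \<otimes> s = ev ys'"
    using ys'_S s simple_closed by (simp add: m_assoc simple_mult_self)
  then show ?thesis
    using that[OF s(1)] ys'_I length_le_word[OF ys'_S] ys ys' unfolding parabolic_def by auto
qed

lemma min_in_coset_of_min_cosets:
  assumes I: "I \<subseteq> S" and x: "x \<in> X I"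
  shows "min_in_coset I x"
proof -
  have xc: "x \<in> carrier G"
    using x unfolding min_cosets_def by simp
  obtain y where y: "y \<in> W I" and min: "min_in_coset I (x \<otimes> inv y)"
    using exists_min_in_coset[OF I xc] by blast
  let ?u = "x \<otimes> inv y"
  have yc: "y \<in> carrier G"
    using y parabolic_closed I by blast
  have uc: "?u \<in> carrier G" and xe: "x = ?u \<otimes> y"
    using xc yc by (simp_all add: m_assoc)
  have "y = \<one>"
  proof (rule ccontr)
    assume "y \<noteq> \<one>"
    then obtain s where s: "s \<in> I" "y \<otimes> s \<in> W I" "len (y \<otimes> s) < len y"
      using parabolic_descent[OF I y] by blast
    have "x \<otimes> s = ?u \<otimes> (y \<otimes> s)"
      using xc yc s I simple_closed by (simp add: m_assoc subset_iff)
    then have "len (x \<otimes> s) = len ?u + len (y \<otimes> s)"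
      using length_mult_of_min_in_coset[OF I uc min s(2)] by simp
    also have "\<dots> < len ?u + len y"
      using s(3) by simp
    also have "\<dots> = len x"
      using length_mult_of_min_in_coset[OF I uc min y] xe by simp
    finally show False
      using x s unfolding min_cosets_def by fastforce
  qed
  then show ?thesis
    using min xc by simp
qed

lemma length_mult_min_cosets: "I \<subseteq> S \<Longrightarrow> x \<in> X I \<Longrightarrow> v \<in> W I \<Longrightarrow> len (x \<otimes> v) = len x + len v"
  by (simp add: length_mult_of_min_in_coset min_in_coset_of_min_cosets min_cosets_def)

lemma par_comp_ex1:
  assumes I: "I \<subseteq> S" and w: "w \<in> carrier G"
  shows "\<exists>!y. y \<in> W I \<and> w \<otimes> inv y \<in> X I"
proof (rule ex_ex1I)
  obtain y where y: "y \<in> W I" "min_in_coset I (w \<otimes> inv y)"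
    using exists_min_in_coset[OF I w] by blast
  then have "w \<otimes> inv y \<in> X I"
    using min_cosetsI[OF I] w parabolic_closed[OF I] by simp
  then show "\<exists>y. y \<in> W I \<and> w \<otimes> inv y \<in> X I"
    using y by blast
next
  fix y1 y2
  assume y1: "y1 \<in> W I \<and> w \<otimes> inv y1 \<in> X I" and y2: "y2 \<in> W I \<and> w \<otimes> inv y2 \<in> X I"
  have c: "y1 \<in> carrier G" "y2 \<in> carrier G"
    using y1 y2 parabolic_closed[OF I] by auto
  let ?z = "y1 \<otimes> inv y2"
  have z_W: "?z \<in> W I"
    using parabolic_mult_closed[OF I] parabolic_inv_closed[OF I] y1 y2 by blast
  have "w \<otimes> inv y2 = (w \<otimes> inv y1) \<otimes> ?z" and "w \<otimes> inv y1 = (w \<otimes> inv y2) \<otimes> inv ?z"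
    using c w by (simp_all add: m_assoc inv_mult_group)
  then have "len (w \<otimes> inv y2) = len (w \<otimes> inv y1) + len ?z"
    and "len (w \<otimes> inv y1) = len (w \<otimes> inv y2) + len (inv ?z)"
    using length_mult_min_cosets[OF I] z_W parabolic_inv_closed[OF I z_W] y1 y2 by metis+
  then have "len ?z = 0"
    by simp
  then have "?z = \<one>"
    using length_eq_0D c by simp
  then show "y1 = y2"
    using c inv_solve_right'[of \<one> y1 y2] by simp
qed

lemma par_comp_spec:
  "I \<subseteq> S \<Longrightarrow> w \<in> carrier G \<Longrightarrow> pcomp I w \<in> W I \<and> w \<otimes> inv (pcomp I w) \<in> X I"
  unfolding par_comp_def by (rule theI') (rule par_comp_ex1)

lemma par_comp_eqI:
  "I \<subseteq> S \<Longrightarrow> w \<in> carrier G \<Longrightarrow> y \<in> W I \<Longrightarrow> w \<otimes> inv y \<in> X I \<Longrightarrow> pcomp I w = y"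
  unfolding par_comp_def by (rule the1_equality[OF par_comp_ex1]) auto

lemma par_comp_closed: "I \<subseteq> S \<Longrightarrow> w \<in> carrier G \<Longrightarrow> pcomp I w \<in> carrier G"
  using par_comp_spec parabolic_closed by blast

lemma par_comp_parabolic:
  assumes I: "I \<subseteq> S" and y: "y \<in> W I"
  shows "pcomp I y = y"
proof -
  have "\<one> \<in> X I"
    using min_cosetsI[OF I] parabolic_closed[OF I] by (simp add: min_in_coset_def)
  then show ?thesis
    using par_comp_eqI[OF I _ y] parabolic_closed[OF I y] by simp
qed

lemma supp_par_comp_subset: "I \<subseteq> S \<Longrightarrow> w \<in> carrier G \<Longrightarrow> supp (pcomp I w) \<subseteq> I"
  using par_comp_spec supp_subset_of_parabolic by blast

lemma supp_par_comp_subset_supp: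
  assumes I: "I \<subseteq> S" and w: "w \<in> carrier G"
  shows "supp (pcomp I w) \<subseteq> supp w"
proof -
  let ?y = "pcomp I w"
  have y: "?y \<in> W I" "w \<otimes> inv ?y \<in> X I" "?y \<in> carrier G"
    using par_comp_spec[OF I w] par_comp_closed[OF I w] by auto
  have "w = (w \<otimes> inv ?y) \<otimes> ?y"
    using w y by (simp add: m_assoc)
  then show ?thesis
    using supp_mult_right[of "w \<otimes> inv ?y" ?y] length_mult_min_cosets[OF I y(2,1)] w y by simp
qed

lemma mult_in_min_cosets:
  assumes IJ: "I \<subseteq> J" and J: "J \<subseteq> S"
    and x: "x \<in> X J" and y_W: "y \<in> W J" and y: "y \<in> X I"
  shows "x \<otimes> y \<in> X I"
  unfolding min_cosets_def
proof (intro CollectI conjI ballI)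
  have c: "x \<in> carrier G" "y \<in> carrier G"
    using x y unfolding min_cosets_def by auto
  then show "x \<otimes> y \<in> carrier G"
    by simp
  fix s
  assume s: "s \<in> I"
  then have "y \<otimes> s \<in> W J"
    using parabolic_mult_closed[OF J y_W simple_in_parabolic] IJ J by blast
  then have "len (x \<otimes> (y \<otimes> s)) = len x + len (y \<otimes> s)"
    using length_mult_min_cosets[OF J x] by blast
  moreover have "len (x \<otimes> y) = len x + len y"
    using length_mult_min_cosets[OF J x y_W] .
  moreover have "len y < len (y \<otimes> s)"
    using y s unfolding min_cosets_def by blast
  ultimately show "len (x \<otimes> y) < len (x \<otimes> y \<otimes> s)"
    using c s IJ J simple_closed by (simp add: m_assoc subset_iff)
qed

lemma par_comp_par_comp:
  assumes IJ: "I \<subseteq> J" and J: "J \<subseteq> S" and w: "w \<in> carrier G"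
  shows "pcomp I (pcomp J w) = pcomp I w"
proof -
  have I: "I \<subseteq> S"
    using IJ J by blast
  let ?y = "pcomp J w"
  let ?z = "pcomp I ?y"
  have y: "?y \<in> W J" "w \<otimes> inv ?y \<in> X J" "?y \<in> carrier G"
    using par_comp_spec[OF J w] par_comp_closed[OF J w] by auto
  have z: "?z \<in> W I" "?y \<otimes> inv ?z \<in> X I" "?z \<in> carrier G"
    using par_comp_spec[OF I y(3)] par_comp_closed[OF I y(3)] by auto
  have "?y \<otimes> inv ?z \<in> W J"
    using parabolic_mult_closed[OF J y(1) parabolic_inv_closed[OF J]] z(1) parabolic_mono[OF IJ] by blast
  then have "(w \<otimes> inv ?y) \<otimes> (?y \<otimes> inv ?z) \<in> X I"
    using mult_in_min_cosets[OF IJ J y(2) _ z(2)] by blast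
  moreover have "(w \<otimes> inv ?y) \<otimes> (?y \<otimes> inv ?z) = w \<otimes> inv ?z"
    using w y z by (simp add: m_assoc)
  ultimately show ?thesis
    using par_comp_eqI[OF I w z(1)] by simp
qed

lemma supp_mono_cox_le: "cox_le G S a b \<Longrightarrow> supp a \<subseteq> supp b"
  unfolding cox_le_def using supp_par_comp_subset_supp[OF supp_subset_simple] by metis

lemma cox_le_trans:
  assumes ab: "cox_le G S a b" and bc: "cox_le G S b c"
  shows "cox_le G S a c"
proof -
  have "pcomp (supp a) c = pcomp (supp a) b"
    using par_comp_par_comp[OF supp_mono_cox_le[OF ab] supp_subset_simple] bc
    unfolding cox_le_def by metis
  then show ?thesis
    using ab bc unfolding cox_le_def by simp
qed

lemma cox_le_par_comp:
  assumes I: "I \<subseteq> S" and v: "v \<in> carrier G"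
  shows "cox_le G S (pcomp I v) v"
proof -
  let ?y = "pcomp I v"
  have "pcomp (supp ?y) v = pcomp (supp ?y) ?y"
    using par_comp_par_comp[OF supp_par_comp_subset[OF I v] I v] by simp
  also have "\<dots> = ?y"
    using par_comp_parabolic[OF supp_subset_simple in_parabolic_supp[OF par_comp_closed[OF I v]]] .
  finally show ?thesis
    unfolding cox_le_def using par_comp_closed[OF I v] v by simp
qed

lemma cox_le_par_comp_of_supp_subset:
  assumes av: "cox_le G S a v" and aI: "supp a \<subseteq> I" and I: "I \<subseteq> S"
  shows "cox_le G S a (pcomp I v)"
  using av par_comp_par_comp[OF aI I] par_comp_closed[OF I]
  unfolding cox_le_def by simp

lemma cox_le_iff_supp_subset:
  assumes av: "cox_le G S a v" and bv: "cox_le G S b v"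
  shows "cox_le G S a b \<longleftrightarrow> supp a \<subseteq> supp b"
proof
  assume "supp a \<subseteq> supp b"
  then have "pcomp (supp a) b = pcomp (supp a) v"
    using bv par_comp_par_comp[of "supp a" "supp b" v] supp_subset_simple
    unfolding cox_le_def by simp
  then show "cox_le G S a b"
    using av bv unfolding cox_le_def by simp
qed (rule supp_mono_cox_le)

lemma par_comp_union_is_join:
  assumes w: "w \<in> cox_interval G S u v" and g: "g \<in> cox_interval G S u v"
  shows "let j = pcomp (supp w \<union> supp g) v in
           j \<in> cox_interval G S u v \<and> cox_le G S w j \<and> cox_le G S g j \<and>
           (\<forall>z\<in>cox_interval G S u v. cox_le G S w z \<and> cox_le G S g z \<longrightarrow> cox_le G S j z) \<and>
           supp j = supp w \<union> supp g"
proof -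
  define J where "J = supp w \<union> supp g"
  define j where "j = pcomp J v"
  have wv: "cox_le G S w v" and gv: "cox_le G S g v" and uw: "cox_le G S u w"
    using w g unfolding cox_interval_def by auto
  have J: "J \<subseteq> S"
    using supp_subset_simple J_def by auto
  have jv: "cox_le G S j v"
    using cox_le_par_comp[OF J] wv unfolding j_def cox_le_def by blast
  have wj: "cox_le G S w j" and gj: "cox_le G S g j"
    using cox_le_par_comp_of_supp_subset[OF _ _ J] wv gv unfolding J_def j_def by auto
  have supp_j: "supp j = J"
    using supp_par_comp_subset[OF J] supp_mono_cox_le[OF wj] supp_mono_cox_le[OF gj] wv
    unfolding J_def j_def cox_le_def by blast
  have "cox_le G S j z" if "cox_le G S z v" "cox_le G S w z" "cox_le G S g z" for z
    using that supp_mono_cox_le cox_le_iff_supp_subset[OF jv] supp_j unfolding J_def by blast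
  then show ?thesis
    using cox_le_trans[OF uw wj] jv wj gj supp_j
    unfolding Let_def cox_interval_def J_def j_def by blast
qed

lemma par_comp_inter_is_meet:
  assumes w: "w \<in> cox_interval G S u v" and g: "g \<in> cox_interval G S u v"
  shows "let m = pcomp (supp w \<inter> supp g) v in
           m \<in> cox_interval G S u v \<and> cox_le G S m w \<and> cox_le G S m g \<and>
           (\<forall>z\<in>cox_interval G S u v. cox_le G S z w \<and> cox_le G S z g \<longrightarrow> cox_le G S z m) \<and>
           supp m \<subseteq> supp w \<inter> supp g"
proof -
  define K where "K = supp w \<inter> supp g"
  define m where "m = pcomp K v"
  have wv: "cox_le G S w v" and gv: "cox_le G S g v" and uw: "cox_le G S u w" and ug: "cox_le G S u g"
    using w g unfolding cox_interval_def by auto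
  have K: "K \<subseteq> S"
    using supp_subset_simple K_def by auto
  have mv: "cox_le G S m v"
    using cox_le_par_comp[OF K] wv unfolding m_def cox_le_def by blast
  have supp_m: "supp m \<subseteq> K"
    using supp_par_comp_subset[OF K] wv unfolding m_def cox_le_def by blast
  have mw: "cox_le G S m w" and mg: "cox_le G S m g"
    using cox_le_iff_supp_subset[OF mv] wv gv supp_m unfolding K_def by auto
  have glb: "cox_le G S z m" if "cox_le G S z v" "cox_le G S z w" "cox_le G S z g" for z
    using that cox_le_par_comp_of_supp_subset[OF _ _ K] supp_mono_cox_le
    unfolding K_def m_def by blast
  have "cox_le G S u m"
    using glb[OF cox_le_trans[OF uw wv] uw ug] .
  then show ?thesis
    using glb mv mw mg supp_m unfolding Let_def cox_interval_def K_def m_def by blast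
qed

end

theorem mainTheorem8:
  fixes G (structure) and S :: "'a set" and u v w g :: 'a
  assumes cox: "coxeter_system G S" and fin: "finite S"
    and uv: "cox_le G S u v" and uv_ne: "u \<noteq> v"
    and w: "w \<in> cox_interval G S u v" and g: "g \<in> cox_interval G S u v"
  shows "(let j = par_comp G S (cox_supp G S w \<union> cox_supp G S g) v in
            j \<in> cox_interval G S u v \<and> cox_le G S w j \<and> cox_le G S g j \<and>
            (\<forall>z\<in>cox_interval G S u v. cox_le G S w z \<and> cox_le G S g z \<longrightarrow> cox_le G S j z) \<and>
            cox_supp G S j = cox_supp G S w \<union> cox_supp G S g)
       \<and> (let m = par_comp G S (cox_supp G S w \<inter> cox_supp G S g) v in
            m \<in> cox_interval G S u v \<and> cox_le G S m w \<and> cox_le G S m g \<and>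
            (\<forall>z\<in>cox_interval G S u v. cox_le G S z w \<and> cox_le G S z g \<longrightarrow> cox_le G S z m) \<and>
            cox_supp G S m \<subseteq> cox_supp G S w \<inter> cox_supp G S g)"
proof -
  interpret coxeter G S
    by (rule coxeter.intro) (rule cox)
  show ?thesis
    using par_comp_union_is_join[OF w g] par_comp_inter_is_meet[OF w g] by blast
qed

end
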